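(* Let $K$ be a complete metric space and let $A$ be a closed subalgebra of $C_b(K)$. If $\rho A$ is a norming subset of $A$, then the set of all smooth points of the closed unit ball $B_A$ contains a dense $G_\delta$ subset of the unit sphere $S_A$.
   Context: $C_b(K)$ is the Banach space of bounded continuous scalar-valued functions on $K$ with the supremum norm. A nonzero $f\in C_b(K)$ is a strong peak function at $t\in K$ if every sequence $\{t_n\}$ in $K$ with $\lim_n|f(t_n)|=\|f\|$ converges to $t$. A point $t\in K$ is a strong peak point for $A$ if there is a strong peak function $f\in A$ with $\|f\|=|f(t)|$; $\rho A$ is the set of all strong peak points for $A$. A subset $F\subset K$ is a norming subset for $A$ if $\|f\|=\sup_{t\in F}|f(t)|$ for all $f\in A$. A point $x$ of the unit ball $B_Z$ of a Banach space $Z$ is a smooth point if there is a unique $z^*\in B_{Z^*}$ with $\operatorname{Re} z^*(x)=1$. *)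

theory Defs
  imports "HOL-Analysis.Analysis"
begin

text \<open>Scalars: the field 'b (instantiated with real or complex). Elements of C_b(K)
  are the bounded continuous functions 'a to 'b with the sup norm.\<close>

definition subalgebra_Cb :: "('a::topological_space \<Rightarrow>\<^sub>C 'b::real_normed_field) set \<Rightarrow> bool" where
  "subalgebra_Cb A \<longleftrightarrow> 0 \<in> A
     \<and> (\<forall>f\<in>A. \<forall>g\<in>A. f + g \<in> A)
     \<and> (\<forall>f\<in>A. \<forall>c::'b. \<exists>h\<in>A. \<forall>t. apply_bcontfun h t = c * apply_bcontfun f t)
     \<and> (\<forall>f\<in>A. \<forall>g\<in>A. \<exists>h\<in>A. \<forall>t. apply_bcontfun h t = apply_bcontfun f t * apply_bcontfun g t)"

definition strong_peak_fun :: "('a::topological_space \<Rightarrow>\<^sub>C 'b::real_normed_field) \<Rightarrow> 'a \<Rightarrow> bool" where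
  "strong_peak_fun f t \<longleftrightarrow> f \<noteq> 0 \<and>
     (\<forall>s::nat \<Rightarrow> 'a. ((\<lambda>n. norm (apply_bcontfun f (s n))) \<longlonglongrightarrow> norm f) \<longrightarrow> s \<longlonglongrightarrow> t)"

definition strong_peak_points :: "('a::topological_space \<Rightarrow>\<^sub>C 'b::real_normed_field) set \<Rightarrow> 'a set" where
  "strong_peak_points A = {t. \<exists>f\<in>A. strong_peak_fun f t \<and> norm f = norm (apply_bcontfun f t)}"

text \<open>F is norming: norm f = sup over t in F of norm (f t), written as: norm f is below every
  nonnegative upper bound of the values norm (f t), t in F, (the reverse inequality is automatic).\<close>
definition norming :: "'a set \<Rightarrow> ('a::topological_space \<Rightarrow>\<^sub>C 'b::real_normed_field) set \<Rightarrow> bool" where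
  "norming F A \<longleftrightarrow> (\<forall>f\<in>A. \<forall>r\<ge>0. (\<forall>t\<in>F. norm (apply_bcontfun f t) \<le> r) \<longrightarrow> norm f \<le> r)"

text \<open>Elements of the closed unit ball of the dual space A*: functionals 'b-linear on A
  with norm at most 1 (two functionals are identified when they agree on A).\<close>
definition dual_ball :: "('a::topological_space \<Rightarrow>\<^sub>C 'b::real_normed_field) set \<Rightarrow> (('a \<Rightarrow>\<^sub>C 'b) \<Rightarrow> 'b) set" where
  "dual_ball A = {\<phi>. (\<forall>f\<in>A. \<forall>g\<in>A. \<phi> (f + g) = \<phi> f + \<phi> g)
       \<and> (\<forall>f\<in>A. \<forall>h\<in>A. \<forall>c::'b. (\<forall>t. apply_bcontfun h t = c * apply_bcontfun f t) \<longrightarrow> \<phi> h = c * \<phi> f)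
       \<and> (\<forall>f\<in>A. norm (\<phi> f) \<le> norm f)}"

text \<open>Smooth point of the unit ball \<open>B_A\<close>; \<open>re\<close> is the real part map of the scalar field
  (identity for real scalars, \<open>Re\<close> for complex scalars).\<close>
definition smooth_point :: "('b \<Rightarrow> real) \<Rightarrow> ('a::topological_space \<Rightarrow>\<^sub>C 'b::real_normed_field) set \<Rightarrow> ('a \<Rightarrow>\<^sub>C 'b) \<Rightarrow> bool" where
  "smooth_point re A x \<longleftrightarrow> x \<in> A \<and> norm x \<le> 1 \<and>
     (\<exists>\<phi>\<in>dual_ball A. re (\<phi> x) = 1) \<and>
     (\<forall>\<phi>\<in>dual_ball A. \<forall>\<psi>\<in>dual_ball A. re (\<phi> x) = 1 \<and> re (\<psi> x) = 1 \<longrightarrow> (\<forall>f\<in>A. \<phi> f = \<psi> f))"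

definition unit_sphere_A :: "('a::topological_space \<Rightarrow>\<^sub>C 'b::real_normed_field) set \<Rightarrow> ('a \<Rightarrow>\<^sub>C 'b) set" where
  "unit_sphere_A A = {f\<in>A. norm f = 1}"

definition gdelta_in :: "'c::topological_space set \<Rightarrow> 'c set \<Rightarrow> bool" where
  "gdelta_in S G \<longleftrightarrow> (\<exists>U::nat \<Rightarrow> 'c set. (\<forall>n. openin (top_of_set S) (U n)) \<and> G = (\<Inter>n. U n))"

definition conclusion_smooth :: "('b \<Rightarrow> real) \<Rightarrow> ('a::topological_space \<Rightarrow>\<^sub>C 'b::real_normed_field) set \<Rightarrow> bool" where
  "conclusion_smooth re A \<longleftrightarrow> (\<exists>G. G \<subseteq> unit_sphere_A A \<and> gdelta_in (unit_sphere_A A) G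
        \<and> unit_sphere_A A \<subseteq> closure G \<and> G \<subseteq> {x. smooth_point re A x})"

end

theory Submission
  imports Defs
begin

text \<open>
  A function f peaks at t if, for every radius \<rho> > 0, its modulus stays a fixed amount
  below its norm outside the ball of radius \<rho> around t.  For n = 0, 1, 2, ... let U_n be the set of
  \<open>f \<in> A\<close> that are concentrated near some point at scale 1/(n+1).  The proof has three parts.
  (1) Each U_n is open in A, invariant under positive scaling and, when the strong peak
      points are norming, dense in A: add to f a small multiple of a high power of a
      normalised strong peak function at a point where |f| is almost maximal.
  (2) Since K is complete, every function in all U_n peaks at some point: the centres of
      concentration form a Cauchy sequence, and f peaks at their limit.
  (3) If x of norm 1 peaks at t, every norm-one functional \<phi> with \<phi> x = 1 is the evaluation at
      t (up to the unimodular factor x t), so x is a smooth point of the unit ball.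
  By the Baire category theorem in the complete space A the intersection of the U_n is a
  dense G-delta in A; normalising its elements yields a dense G-delta subset of the unit sphere
  consisting of smooth points.
\<close>


subsection \<open>Closure properties of subalgebras of C_b(K)\<close>

text \<open>The subalgebra axioms state closure under scalar and pointwise products only up to
  pointwise equality; these lemmas put them in the form used below.\<close>

lemma subalgebra_add: "subalgebra_Cb A \<Longrightarrow> f \<in> A \<Longrightarrow> g \<in> A \<Longrightarrow> f + g \<in> A"
  unfolding subalgebra_Cb_def by blast

lemma subalgebra_scale:
  fixes A :: "('a::topological_space \<Rightarrow>\<^sub>C 'b::real_normed_field) set"
  shows "subalgebra_Cb A \<Longrightarrow> f \<in> A \<Longrightarrow> \<exists>h\<in>A. \<forall>t. h t = c * f t"
  unfolding subalgebra_Cb_def by blast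

lemma subalgebra_scaleR:
  fixes A :: "('a::topological_space \<Rightarrow>\<^sub>C 'b::real_normed_field) set"
  assumes "subalgebra_Cb A" "f \<in> A"
  shows "c *\<^sub>R f \<in> A"
proof -
  obtain h where "h \<in> A" "\<And>t. h t = of_real c * f t"
    using subalgebra_scale[OF assms] by blast
  moreover have "h = c *\<^sub>R f"
    by (rule bcontfun_eqI) (simp add: calculation scaleR_conv_of_real)
  ultimately show ?thesis by simp
qed

lemma subalgebra_diff:
  fixes A :: "('a::topological_space \<Rightarrow>\<^sub>C 'b::real_normed_field) set"
  assumes "subalgebra_Cb A" "f \<in> A" "g \<in> A"
  shows "f - g \<in> A"
  using subalgebra_add[OF assms(1,2) subalgebra_scaleR[OF assms(1,3), of "-1"]] by simp

lemma subalgebra_power: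
  fixes A :: "('a::topological_space \<Rightarrow>\<^sub>C 'b::real_normed_field) set"
  assumes "subalgebra_Cb A" "g \<in> A"
  shows "\<exists>h\<in>A. \<forall>t. h t = (g t) ^ Suc k"
proof (induction k)
  case 0
  then show ?case using assms by auto
next
  case (Suc k)
  then obtain h where "h \<in> A" "\<forall>t. h t = (g t) ^ Suc k" by blast
  moreover obtain w where "w \<in> A" "\<forall>t. w t = h t * g t"
    using assms \<open>h \<in> A\<close> unfolding subalgebra_Cb_def by blast
  ultimately show ?case by (auto simp: mult.commute)
qed

lemma unimodular_phase:
  fixes z :: "'b::real_normed_field"
  obtains \<mu> where "norm \<mu> = 1" "\<mu> * of_real (norm z) = z"
proof (cases "z = 0")
  case True
  then show ?thesis using that[of 1] by simp
next
  case False
  then show ?thesis using that[of "z / of_real (norm z)"] by (simp add: norm_divide)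
qed


subsection \<open>Concentration and peaking\<close>

definition concentrated :: "('a::metric_space \<Rightarrow>\<^sub>C 'b::real_normed_vector) \<Rightarrow> 'a \<Rightarrow> real \<Rightarrow> bool"
  where "concentrated f t \<rho> \<longleftrightarrow>
    (\<exists>r. 0 \<le> r \<and> r < norm f \<and> (\<forall>s. \<rho> \<le> dist s t \<longrightarrow> norm (f s) \<le> r))"

definition peaks_at :: "('a::metric_space \<Rightarrow>\<^sub>C 'b::real_normed_vector) \<Rightarrow> 'a \<Rightarrow> bool"
  where "peaks_at f t \<longleftrightarrow> (\<forall>\<rho>>0. concentrated f t \<rho>)"

lemma concentrated_nonzero: "concentrated f t \<rho> \<Longrightarrow> norm f > 0"
  unfolding concentrated_def by auto

lemma concentrated_shift:
  assumes "concentrated f t \<rho>" "\<rho> + dist t t' \<le> \<rho>'"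
  shows "concentrated f t' \<rho>'"
proof -
  have "\<rho> \<le> dist s t" if "\<rho>' \<le> dist s t'" for s
    using assms(2) that dist_triangle[of s t' t] by (simp add: dist_commute)
  then show ?thesis using assms(1) unfolding concentrated_def by meson
qed

text \<open>Two centres of concentration of the same function are close: a point where |f| is
  almost maximal lies within both balls.\<close>
lemma concentrated_centres_close:
  assumes "concentrated f t \<rho>" "concentrated f t' \<rho>'"
  shows "dist t t' < \<rho> + \<rho>'"
proof -
  obtain r r' where r: "r < norm f" "\<And>s. \<rho> \<le> dist s t \<Longrightarrow> norm (f s) \<le> r"
    and r': "r' < norm f" "\<And>s. \<rho>' \<le> dist s t' \<Longrightarrow> norm (f s) \<le> r'"
    using assms unfolding concentrated_def by blast
  obtain s where s: "norm (f s) > max r r'"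
  proof (rule ccontr)
    assume "\<not> thesis"
    then have "norm f \<le> max r r'" using that by (intro norm_bound) (meson not_le)
    then show False using r(1) r'(1) by linarith
  qed
  then have "dist s t < \<rho>" "dist s t' < \<rho>'" using r(2) r'(2) by (meson max.strict_boundedE not_le)+
  then show ?thesis using dist_triangle2[of t t' s] by (simp add: dist_commute)
qed

text \<open>A peaking function attains its norm at the peak, by continuity.\<close>
lemma peaks_at_norm:
  fixes f :: "'a::metric_space \<Rightarrow>\<^sub>C 'b::real_normed_vector"
  assumes "peaks_at f t"
  shows "norm (f t) = norm f"
proof (rule ccontr)
  assume "norm (f t) \<noteq> norm f"
  then have gap: "0 < norm f - norm (f t)" using norm_bounded[of f t] by linarith
  define \<epsilon> where "\<epsilon> = (norm f - norm (f t)) / 2"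
  have "\<epsilon> > 0" using gap by (simp add: \<epsilon>_def)
  have "isCont f t"
    using continuous_on_apply_bcontfun[of UNIV f] continuous_on_eq_continuous_at open_UNIV by blast
  then obtain \<rho> where "\<rho> > 0" and near: "\<And>s. dist s t < \<rho> \<Longrightarrow> dist (f s) (f t) < \<epsilon>"
    using \<open>\<epsilon> > 0\<close> unfolding continuous_at_eps_delta by blast
  then obtain r where r: "r < norm f" "\<And>s. \<rho> \<le> dist s t \<Longrightarrow> norm (f s) \<le> r"
    using assms unfolding peaks_at_def concentrated_def by blast
  have "norm (f s) \<le> max r (norm f - \<epsilon>)" for s
  proof (cases "dist s t < \<rho>")
    case True
    then have "norm (f s) \<le> norm f - \<epsilon>" using near[OF True] norm_triangle_ineq2[of "f s" "f t"]
      unfolding dist_norm \<epsilon>_def by (simp add: field_simps)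
    then show ?thesis by simp
  next
    case False
    then show ?thesis using r(2)[of s] by simp
  qed
  then have "norm f \<le> max r (norm f - \<epsilon>)" by (rule norm_bound)
  then show False using r(1) \<open>\<epsilon> > 0\<close> by linarith
qed

text \<open>A strong peak function peaks at its peak point: a sequence staying \<rho> away from t
  along which |f| tends to \<parallel>f\<parallel> would have to converge to t.\<close>
lemma strong_peak_fun_peaks_at:
  fixes f :: "'a::metric_space \<Rightarrow>\<^sub>C 'b::real_normed_field"
  assumes "strong_peak_fun f t"
  shows "peaks_at f t"
  unfolding peaks_at_def
proof (intro allI impI)
  fix \<rho> :: real
  assume "\<rho> > 0"
  have "norm f > 0" using assms unfolding strong_peak_fun_def by simp
  show "concentrated f t \<rho>"
  proof (rule ccontr)
    assume "\<not> concentrated f t \<rho>"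
    then have far: "\<exists>s. \<rho> \<le> dist s t \<and> r < norm (f s)" if "0 \<le> r" "r < norm f" for r
      using that unfolding concentrated_def by (meson not_le)
    have "\<exists>s. \<rho> \<le> dist s t \<and> max 0 (norm f - 1 / real (Suc m)) < norm (f s)" for m
      by (rule far) (use \<open>norm f > 0\<close> in auto)
    then obtain s where s: "\<And>m. \<rho> \<le> dist (s m) t"
      "\<And>m. max 0 (norm f - 1 / real (Suc m)) < norm (f (s m))"
      by metis
    have "(\<lambda>m. norm (f (s m))) \<longlonglongrightarrow> norm f"
    proof (rule tendsto_sandwich[of "\<lambda>m. norm f - 1 / real (Suc m)" _ _ "\<lambda>m. norm f"])
      show "\<forall>\<^sub>F m in sequentially. norm f - 1 / real (Suc m) \<le> norm (f (s m))"
        using s(2) by (simp add: less_imp_le)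
      show "((\<lambda>m. norm f - 1 / real (Suc m)) \<longlongrightarrow> norm f) sequentially"
        using LIMSEQ_inverse_real_of_nat_add_minus[of "norm f"] by (simp add: inverse_eq_divide)
    qed (simp_all add: norm_bounded)
    then have "s \<longlonglongrightarrow> t" using assms unfolding strong_peak_fun_def by blast
    then obtain m where "dist (s m) t < \<rho>" using \<open>\<rho> > 0\<close> unfolding lim_sequentially by blast
    then show False using s(1)[of m] by simp
  qed
qed

lemma inverse_Suc_eventually_less:
  assumes "e > (0::real)"
  obtains N where "\<And>n. n \<ge> N \<Longrightarrow> 1 / real (Suc n) < e"
proof -
  obtain N where "1 / real (Suc N) < e" using nat_approx_posE[OF assms] by blast
  moreover have "1 / real (Suc n) \<le> 1 / real (Suc N)" if "n \<ge> N" for n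
    using that by (simp add: frac_le)
  ultimately show ?thesis using that by (meson le_less_trans)
qed

lemma peaks_at_limit_of_centres:
  fixes f :: "'a::complete_space \<Rightarrow>\<^sub>C 'b::real_normed_vector"
  assumes "\<And>n. \<exists>t. concentrated f t (1 / real (Suc n))"
  obtains t where "peaks_at f t"
proof -
  obtain T where T: "\<And>n. concentrated f (T n) (1 / real (Suc n))" using assms by metis
  have "Cauchy T"
  proof (rule metric_CauchyI)
    fix e :: real
    assume "e > 0"
    then obtain N where N: "\<And>n. n \<ge> N \<Longrightarrow> 1 / real (Suc n) < e / 2"
      using inverse_Suc_eventually_less[of "e / 2"] by auto
    have "dist (T m) (T n) < e" if "m \<ge> N" "n \<ge> N" for m n
      using concentrated_centres_close[OF T T, of m n] N[OF that(1)] N[OF that(2)] by linarith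
    then show "\<exists>M. \<forall>m\<ge>M. \<forall>n\<ge>M. dist (T m) (T n) < e" by blast
  qed
  then obtain t where t: "T \<longlonglongrightarrow> t" using Cauchy_convergent convergent_def by blast
  have "concentrated f t \<rho>" if "\<rho> > 0" for \<rho>
  proof -
    obtain N1 where N1: "\<And>n. n \<ge> N1 \<Longrightarrow> 1 / real (Suc n) < \<rho> / 2"
      using inverse_Suc_eventually_less[of "\<rho> / 2"] \<open>\<rho> > 0\<close> by auto
    obtain N2 where N2: "\<And>n. n \<ge> N2 \<Longrightarrow> dist (T n) t < \<rho> / 2"
      using t \<open>\<rho> > 0\<close> unfolding lim_sequentially by (meson half_gt_zero)
    have "1 / real (Suc (max N1 N2)) + dist (T (max N1 N2)) t \<le> \<rho>"
      using N1[of "max N1 N2"] N2[of "max N1 N2"] by simp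
    then show ?thesis using concentrated_shift[OF T] by blast
  qed
  then show ?thesis using that unfolding peaks_at_def by blast
qed


subsection \<open>The sets U_n\<close>

definition concentrated_set :: "('a::metric_space \<Rightarrow>\<^sub>C 'b::real_normed_vector) set \<Rightarrow> nat \<Rightarrow> ('a \<Rightarrow>\<^sub>C 'b) set"
  where "concentrated_set A n = {f \<in> A. \<exists>t. concentrated f t (1 / real (Suc n))}"

text \<open>Concentration is a strict inequality between continuous quantities, so it is stable
  under small uniform perturbations.\<close>
lemma concentrated_set_open:
  fixes A :: "('a::metric_space \<Rightarrow>\<^sub>C 'b::real_normed_vector) set"
  shows "openin (top_of_set A) (concentrated_set A n)"
  unfolding openin_euclidean_subtopology_iff
proof (intro conjI ballI)
  show "concentrated_set A n \<subseteq> A" unfolding concentrated_set_def by auto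
  fix f
  assume "f \<in> concentrated_set A n"
  then obtain t r where r: "0 \<le> r" "r < norm f" "\<And>s. 1 / real (Suc n) \<le> dist s t \<Longrightarrow> norm (f s) \<le> r"
    unfolding concentrated_set_def concentrated_def by blast
  define e where "e = (norm f - r) / 2"
  have "e > 0" using r(2) by (simp add: e_def)
  have "g \<in> concentrated_set A n" if "g \<in> A" "dist g f < e" for g
  proof -
    have pointwise: "norm (g s) \<le> norm (f s) + e" for s
      using norm_bounded[of "g - f" s] norm_triangle_ineq2[of "g s" "f s"] that(2)
      by (simp add: dist_norm)
    have "norm f - norm g \<le> norm (g - f)"
      using norm_triangle_ineq3[of f g] norm_minus_commute[of f g] by linarith
    then have "r + e < norm g"
      using that(2) unfolding dist_norm e_def by (simp add: field_simps)
    then have "concentrated g t (1 / real (Suc n))"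
      unfolding concentrated_def using r pointwise \<open>e > 0\<close>
      by (intro exI[of _ "r + e"]) (fastforce intro: order_trans)
    then show ?thesis using that(1) unfolding concentrated_set_def by blast
  qed
  then show "\<exists>e>0. \<forall>g\<in>A. dist g f < e \<longrightarrow> g \<in> concentrated_set A n" using \<open>e > 0\<close> by blast
qed

lemma concentrated_set_scaleR:
  fixes A :: "('a::metric_space \<Rightarrow>\<^sub>C 'b::real_normed_field) set"
  assumes "subalgebra_Cb A" "f \<in> concentrated_set A n" "c > 0"
  shows "c *\<^sub>R f \<in> concentrated_set A n"
proof -
  obtain t r where "f \<in> A" "0 \<le> r" "r < norm f" "\<And>s. 1 / real (Suc n) \<le> dist s t \<Longrightarrow> norm (f s) \<le> r"
    using assms(2) unfolding concentrated_set_def concentrated_def by blast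
  then have "concentrated (c *\<^sub>R f) t (1 / real (Suc n))"
    unfolding concentrated_def using assms(3)
    by (intro exI[of _ "c * r"]) (simp add: mult_left_mono)
  then show ?thesis using subalgebra_scaleR[OF assms(1) \<open>f \<in> A\<close>]
    unfolding concentrated_set_def by blast
qed

lemma norming_almost_max:
  assumes "norming F A" "f \<in> A" "F \<noteq> {}" "e > 0"
  obtains t where "t \<in> F" "norm (f t) > norm f - e"
proof -
  have "\<exists>t\<in>F. norm (f t) > norm f - e"
  proof (rule ccontr)
    assume "\<not> ?thesis"
    then have below: "\<forall>t\<in>F. norm (f t) \<le> norm f - e" by (simp add: not_less)
    show False
    proof (cases "norm f - e < 0")
      case True
      obtain t where "t \<in> F" using assms(3) by blast
      then have "norm (f t) \<le> norm f - e" using below by blast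
      then show False using True norm_ge_zero[of "f t"] by linarith
    next
      case False
      then have "norm f \<le> norm f - e" using below assms(1,2) unfolding norming_def by simp
      then show False using assms(4) by simp
    qed
  qed
  then show ?thesis using that by blast
qed

text \<open>Powers of a normalised peak function: a function in A equal to 1 at t, bounded by 1,
  and smaller than \<epsilon> outside the \<rho>-ball around t.\<close>
lemma peak_power:
  fixes A :: "('a::metric_space \<Rightarrow>\<^sub>C 'b::real_normed_field) set"
  assumes sub: "subalgebra_Cb A" and "g \<in> A" "peaks_at g t" "\<rho> > 0" "\<epsilon> > 0"
  obtains w where "w \<in> A" "w t = 1" "\<And>s. norm (w s) \<le> 1"
    "\<And>s. \<rho> \<le> dist s t \<Longrightarrow> norm (w s) < \<epsilon>"
proof -
  have ng: "norm (g t) = norm g" by (rule peaks_at_norm[OF assms(3)])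
  obtain r where r: "0 \<le> r" "r < norm g" "\<And>s. \<rho> \<le> dist s t \<Longrightarrow> norm (g s) \<le> r"
    using assms(3,4) unfolding peaks_at_def concentrated_def by blast
  then have "g t \<noteq> 0" using ng by auto
  obtain u where u: "u \<in> A" "\<And>s. u s = inverse (g t) * g s"
    using subalgebra_scale[OF sub \<open>g \<in> A\<close>] by blast
  have nu: "norm (u s) = norm (g s) / norm g" for s
    using ng by (simp add: u(2) norm_mult norm_inverse divide_inverse mult.commute)
  define q where "q = r / norm g"
  have "norm g > 0" using r by linarith
  then have q: "0 \<le> q" "q < 1" using r by (simp_all add: q_def)
  obtain k where "q ^ k < \<epsilon>" using real_arch_pow_inv[OF \<open>\<epsilon> > 0\<close> q(2)] by blast
  moreover have "q ^ Suc k \<le> q ^ k" using q by (simp add: mult_left_le_one_le)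
  ultimately have k: "q ^ Suc k < \<epsilon>" by linarith
  obtain w where w: "w \<in> A" "\<And>s. w s = (u s) ^ Suc k"
    using subalgebra_power[OF sub u(1)] by blast
  show ?thesis
  proof (rule that[OF w(1)])
    show "w t = 1" using \<open>g t \<noteq> 0\<close> by (simp add: w(2) u(2))
    show "norm (w s) \<le> 1" for s
    proof -
      have "norm (u s) \<le> 1" using nu[of s] norm_bounded[of g s] \<open>norm g > 0\<close> by simp
      then show ?thesis unfolding w(2) norm_power by (rule power_le_one[OF norm_ge_zero])
    qed
    show "norm (w s) < \<epsilon>" if "\<rho> \<le> dist s t" for s
    proof -
      have "norm (u s) \<le> q" using nu[of s] r(3)[OF that] r(2) by (simp add: q_def divide_right_mono)
      then have "norm (w s) \<le> q ^ Suc k"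
        unfolding w(2) norm_power by (rule power_mono[OF _ norm_ge_zero])
      then show ?thesis using k by simp
    qed
  qed
qed

text \<open>Density of U_n: lift f near a strong peak point where |f| is almost maximal by a
  small bump that peaks there, rotated to the phase of f.\<close>
lemma concentrated_set_approx:
  fixes A :: "('a::metric_space \<Rightarrow>\<^sub>C 'b::real_normed_field) set"
  assumes sub: "subalgebra_Cb A" and norming: "norming (strong_peak_points A) A"
    and nonempty: "strong_peak_points A \<noteq> {}" and "f \<in> A" "e > 0"
  obtains h where "h \<in> concentrated_set A n" "dist h f \<le> e"
proof -
  obtain t where t: "t \<in> strong_peak_points A" "norm (f t) > norm f - e / 2"
    using norming_almost_max[OF norming \<open>f \<in> A\<close> nonempty, of "e / 2"] \<open>e > 0\<close> by auto
  then obtain g where "g \<in> A" "strong_peak_fun g t"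
    unfolding strong_peak_points_def by blast
  then obtain w where w: "w \<in> A" "w t = 1" "\<And>s. norm (w s) \<le> 1"
    "\<And>s. 1 / real (Suc n) \<le> dist s t \<Longrightarrow> norm (w s) < 1 / 2"
    using peak_power[OF sub, of g t "1 / real (Suc n)" "1 / 2"] strong_peak_fun_peaks_at by auto
  obtain \<mu> where \<mu>: "norm \<mu> = 1" "\<mu> * of_real (norm (f t)) = f t"
    using unimodular_phase by blast
  obtain v where v: "v \<in> A" "\<And>s. v s = (of_real e * \<mu>) * w s"
    using subalgebra_scale[OF sub w(1)] by blast
  have nv: "norm (v s) = e * norm (w s)" for s
    using \<open>e > 0\<close> by (simp add: v(2) norm_mult \<mu>(1))
  define h where "h = f + v"
  have "h t = \<mu> * of_real (norm (f t) + e)"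
    using \<mu>(2) by (simp add: h_def v(2) w(2) algebra_simps)
  then have "norm (h t) = norm (f t) + e"
    using \<open>e > 0\<close> \<mu>(1) by (simp add: norm_mult del: of_real_add)
  then have big: "norm f + e / 2 < norm h" using norm_bounded[of h t] t(2) by linarith
  have far: "norm (h s) \<le> norm f + e / 2" if "1 / real (Suc n) \<le> dist s t" for s
  proof -
    have "norm (h s) \<le> norm (f s) + e * norm (w s)"
      using norm_triangle_ineq[of "f s" "v s"] by (simp add: h_def nv)
    also have "\<dots> \<le> norm f + e / 2"
      using norm_bounded[of f s] w(4)[OF that] \<open>e > 0\<close> by (simp add: add_mono)
    finally show ?thesis .
  qed
  have "concentrated h t (1 / real (Suc n))"
    unfolding concentrated_def using big far \<open>e > 0\<close> by (intro exI[of _ "norm f + e / 2"]) simp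
  then have "h \<in> concentrated_set A n"
    using subalgebra_add[OF sub \<open>f \<in> A\<close> v(1)] unfolding concentrated_set_def h_def by blast
  moreover have "dist h f \<le> e"
  proof -
    have "norm v \<le> e" using nv w(3) \<open>e > 0\<close> by (intro norm_bound) (simp add: mult_left_le)
    then show ?thesis by (simp add: h_def dist_norm)
  qed
  ultimately show ?thesis by (rule that)
qed

lemma concentrated_set_dense:
  fixes A :: "('a::metric_space \<Rightarrow>\<^sub>C 'b::real_normed_field) set"
  assumes "subalgebra_Cb A" "norming (strong_peak_points A) A" "strong_peak_points A \<noteq> {}"
  shows "A \<subseteq> closure (concentrated_set A n)"
proof
  fix f
  assume "f \<in> A"
  show "f \<in> closure (concentrated_set A n)"
    unfolding closure_approachable
  proof (intro allI impI)
    fix e :: real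
    assume "e > 0"
    then obtain h where "h \<in> concentrated_set A n" "dist h f \<le> e / 2"
      using concentrated_set_approx[OF assms \<open>f \<in> A\<close>, of "e / 2"] by auto
    then show "\<exists>h\<in>concentrated_set A n. dist h f < e" using \<open>e > 0\<close> by force
  qed
qed


subsection \<open>Functions peaking at a point are smooth points\<close>

lemma dual_ball_add: "\<phi> \<in> dual_ball A \<Longrightarrow> f \<in> A \<Longrightarrow> g \<in> A \<Longrightarrow> \<phi> (f + g) = \<phi> f + \<phi> g"
  unfolding dual_ball_def by blast

lemma dual_ball_scale:
  "\<phi> \<in> dual_ball A \<Longrightarrow> f \<in> A \<Longrightarrow> h \<in> A \<Longrightarrow> (\<And>t. h t = c * f t) \<Longrightarrow> \<phi> h = c * \<phi> f"
  unfolding dual_ball_def by blast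

lemma dual_ball_bound: "\<phi> \<in> dual_ball A \<Longrightarrow> f \<in> A \<Longrightarrow> norm (\<phi> f) \<le> norm f"
  unfolding dual_ball_def by blast

lemma evaluation_in_dual_ball:
  fixes A :: "('a::topological_space \<Rightarrow>\<^sub>C 'b::real_normed_field) set"
  assumes "norm (x t) = 1"
  shows "(\<lambda>g :: 'a \<Rightarrow>\<^sub>C 'b. g t / x t) \<in> dual_ball A"
  using assms norm_bounded
  unfolding dual_ball_def by (auto simp: add_divide_distrib norm_divide)

text \<open>If x of norm 1 peaks at t and h vanishes at t, then \<open>x + r h\<close> has norm at most
  \<open>1 + r \<eta>\<close> for some r > 0: near t the term h is small, away from t the function x is.\<close>
lemma peak_perturbation_bound:
  fixes x h :: "'a::metric_space \<Rightarrow>\<^sub>C 'b::real_normed_vector"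
  assumes "norm x = 1" "peaks_at x t" "h t = 0" "\<eta> > 0"
  obtains r where "r > 0" "\<And>s. norm (x s) + r * norm (h s) \<le> 1 + r * \<eta>"
proof -
  have "isCont h t"
    using continuous_on_apply_bcontfun[of UNIV h] continuous_on_eq_continuous_at open_UNIV by blast
  then obtain \<rho> where "\<rho> > 0" and near: "\<And>s. dist s t < \<rho> \<Longrightarrow> dist (h s) (h t) < \<eta>"
    using \<open>\<eta> > 0\<close> unfolding continuous_at_eps_delta by blast
  then obtain q where q: "q < 1" "\<And>s. \<rho> \<le> dist s t \<Longrightarrow> norm (x s) \<le> q"
    using assms(1,2) unfolding peaks_at_def concentrated_def by force
  define r where "r = (1 - q) / (norm h + 1)"
  have "r > 0" using q(1) by (simp add: r_def add_nonneg_pos)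
  have "r * norm h = (1 - q) * (norm h / (norm h + 1))" by (simp add: r_def)
  also have "\<dots> < (1 - q) * 1"
    using q(1) by (intro mult_strict_left_mono) (simp_all add: add_nonneg_pos)
  finally have "r * norm h < 1 - q" by simp
  have "norm (x s) + r * norm (h s) \<le> 1 + r * \<eta>" for s
  proof (cases "dist s t < \<rho>")
    case True
    then have "r * norm (h s) \<le> r * \<eta>" using near[OF True] assms(3) \<open>r > 0\<close> by simp
    then show ?thesis using norm_bounded[of x s] assms(1) by simp
  next
    case False
    have "r * norm (h s) \<le> r * norm h" using norm_bounded[of h s] \<open>r > 0\<close> by simp
    moreover have "0 \<le> r * \<eta>" using \<open>r > 0\<close> \<open>\<eta> > 0\<close> by simp
    ultimately show ?thesis
      using q(2)[of s] False \<open>r * norm h < 1 - q\<close> by linarith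
  qed
  then show ?thesis using that \<open>r > 0\<close> by blast
qed

text \<open>A norm-one functional taking the value 1 at a peaking x of norm 1 annihilates every
  function vanishing at the peak: otherwise a perturbation \<open>x + \<alpha> h\<close> of norm close to 1
  would be mapped to a value of modulus noticeably larger than 1.\<close>
lemma dual_ball_vanishes_at_peak:
  fixes A :: "('a::metric_space \<Rightarrow>\<^sub>C 'b::real_normed_field) set"
  assumes sub: "subalgebra_Cb A" and \<phi>: "\<phi> \<in> dual_ball A"
    and "x \<in> A" "norm x = 1" "peaks_at x t" "\<phi> x = 1" and "h \<in> A" "h t = 0"
  shows "\<phi> h = 0"
proof -
  have small: "norm (\<phi> h) \<le> \<eta>" if \<eta>: "\<eta> > 0" for \<eta>
  proof -
    obtain r where "r > 0" and bound: "\<And>s. norm (x s) + r * norm (h s) \<le> 1 + r * \<eta>"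
      using peak_perturbation_bound[OF assms(4,5,8) \<eta>] by blast
    obtain \<mu> where \<mu>: "norm \<mu> = 1" "\<mu> * of_real (norm (\<phi> h)) = \<phi> h"
      using unimodular_phase by blast
    define \<alpha> where "\<alpha> = of_real r * inverse \<mu>"
    have "\<mu> \<noteq> 0" using \<mu>(1) by auto
    obtain w where w: "w \<in> A" "\<And>s. w s = \<alpha> * h s"
      using subalgebra_scale[OF sub \<open>h \<in> A\<close>] by blast
    have "\<phi> w = \<alpha> * \<phi> h" by (rule dual_ball_scale[OF \<phi> \<open>h \<in> A\<close> w])
    also have "\<dots> = of_real (r * norm (\<phi> h))"
      using \<open>\<mu> \<noteq> 0\<close> by (subst \<mu>(2)[symmetric]) (simp add: \<alpha>_def field_simps)
    finally have perturbed_value: "\<phi> (x + w) = of_real (1 + r * norm (\<phi> h))"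
      using dual_ball_add[OF \<phi> \<open>x \<in> A\<close> w(1)] \<open>\<phi> x = 1\<close> by simp
    have "norm (\<phi> (x + w)) = 1 + r * norm (\<phi> h)"
      unfolding perturbed_value norm_of_real using \<open>r > 0\<close> by simp
    then have "1 + r * norm (\<phi> h) \<le> norm (x + w)"
      using dual_ball_bound[OF \<phi> subalgebra_add[OF sub \<open>x \<in> A\<close> w(1)]] by simp
    also have "\<dots> \<le> 1 + r * \<eta>"
    proof (rule norm_bound)
      fix s
      have "norm (w s) = r * norm (h s)"
        using \<mu>(1) \<open>r > 0\<close> by (simp add: w(2) \<alpha>_def norm_mult norm_inverse)
      then show "norm ((x + w) s) \<le> 1 + r * \<eta>"
        using norm_triangle_ineq[of "x s" "w s"] bound[of s] by simp
    qed
    finally show ?thesis using \<open>r > 0\<close> by simp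
  qed
  show ?thesis
  proof (rule ccontr)
    assume "\<phi> h \<noteq> 0"
    then show False using small[of "norm (\<phi> h) / 2"] by simp
  qed
qed

lemma dual_ball_at_peak:
  fixes A :: "('a::metric_space \<Rightarrow>\<^sub>C 'b::real_normed_field) set"
  assumes sub: "subalgebra_Cb A" and \<phi>: "\<phi> \<in> dual_ball A"
    and "x \<in> A" "norm x = 1" "peaks_at x t" "\<phi> x = 1" and "g \<in> A"
  shows "\<phi> g = g t / x t"
proof -
  have "x t \<noteq> 0" using peaks_at_norm[OF assms(5)] assms(4) by auto
  define c where "c = g t / x t"
  obtain z where z: "z \<in> A" "\<And>s. z s = c * x s" using subalgebra_scale[OF sub \<open>x \<in> A\<close>] by blast
  have "\<phi> z = c" using dual_ball_scale[OF \<phi> \<open>x \<in> A\<close> z] \<open>\<phi> x = 1\<close> by simp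
  have "g - z \<in> A" by (rule subalgebra_diff[OF sub \<open>g \<in> A\<close> z(1)])
  moreover have "(g - z) t = 0" using \<open>x t \<noteq> 0\<close> by (simp add: z(2) c_def)
  ultimately have "\<phi> (g - z) = 0" by (rule dual_ball_vanishes_at_peak[OF sub \<phi> assms(3-6)])
  moreover have "\<phi> g = \<phi> (g - z) + \<phi> z"
    using dual_ball_add[OF \<phi> \<open>g - z \<in> A\<close> z(1)] by simp
  ultimately show ?thesis using \<open>\<phi> z = c\<close> by (simp add: c_def)
qed

text \<open>The real-part map re is only required to detect the value 1 on the closed unit disc.\<close>
lemma peaks_at_smooth_point:
  fixes A :: "('a::metric_space \<Rightarrow>\<^sub>C 'b::real_normed_field) set"
  assumes sub: "subalgebra_Cb A" and re1: "re 1 = 1"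
    and reI: "\<And>z. norm z \<le> 1 \<Longrightarrow> re z = 1 \<Longrightarrow> z = 1"
    and "x \<in> A" "norm x = 1" "peaks_at x t"
  shows "smooth_point re A x"
  unfolding smooth_point_def
proof (intro conjI ballI impI)
  have "norm (x t) = 1" using peaks_at_norm[OF assms(6)] assms(5) by simp
  then show "\<exists>\<phi>\<in>dual_ball A. re (\<phi> x) = 1"
    using evaluation_in_dual_ball[of x t A] re1
    by (intro bexI[of _ "\<lambda>g :: 'a \<Rightarrow>\<^sub>C 'b. g t / x t"]) auto
  have value_one: "\<phi> x = 1" if "\<phi> \<in> dual_ball A" "re (\<phi> x) = 1" for \<phi>
    using dual_ball_bound[OF that(1) \<open>x \<in> A\<close>] \<open>norm x = 1\<close> reI that(2) by simp
  fix \<phi> \<psi> f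
  assume \<phi>: "\<phi> \<in> dual_ball A" and \<psi>: "\<psi> \<in> dual_ball A"
    and re: "re (\<phi> x) = 1 \<and> re (\<psi> x) = 1" and "f \<in> A"
  have "\<phi> f = f t / x t"
    using dual_ball_at_peak[OF sub \<phi> assms(4-6) value_one[OF \<phi>] \<open>f \<in> A\<close>] re by blast
  moreover have "\<psi> f = f t / x t"
    using dual_ball_at_peak[OF sub \<psi> assms(4-6) value_one[OF \<psi>] \<open>f \<in> A\<close>] re by blast
  ultimately show "\<phi> f = \<psi> f" by simp
qed (use assms in auto)


subsection \<open>Baire category and normalisation\<close>

lemma closed_Baire:
  fixes A :: "'v::complete_space set" and U :: "nat \<Rightarrow> 'v set"
  assumes "closed A" "\<And>n. openin (top_of_set A) (U n)" "\<And>n. A \<subseteq> closure (U n)"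
  shows "A \<subseteq> closure (\<Inter>n. U n)"
proof -
  have "completely_metrizable_space (top_of_set A)"
    using completely_metrizable_space_closedin[OF completely_metrizable_space_euclidean]
      assms(1) closed_closedin by blast
  moreover have "top_of_set A closure_of U n = topspace (top_of_set A)" for n
  proof -
    have "U n \<subseteq> A" using assms(2)[of n] by (rule openin_imp_subset)
    then show ?thesis using assms(3)[of n] by (auto simp: closure_of_subtopology Int_absorb1)
  qed
  moreover have "countable (range U)" by simp
  ultimately have "top_of_set A closure_of \<Inter>(range U) = topspace (top_of_set A)"
    using assms(2) by (intro Baire_category) auto
  then have "A \<subseteq> closure (A \<inter> (\<Inter>n. U n))" by (auto simp: closure_of_subtopology)
  then show ?thesis using closure_mono[of "A \<inter> (\<Inter>n. U n)" "\<Inter>n. U n"] by blast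
qed

lemma normalised_points_dense:
  fixes G :: "'v::real_normed_vector set"
  assumes scale: "\<And>y c. y \<in> G \<Longrightarrow> c > 0 \<Longrightarrow> c *\<^sub>R y \<in> G" and "0 \<notin> G"
    and "norm x = 1" "x \<in> closure G"
  shows "x \<in> closure {y \<in> G. norm y = 1}"
  unfolding closure_approachable
proof (intro allI impI)
  fix e :: real
  assume "e > 0"
  then obtain f where "f \<in> G" "dist f x < e / 2"
    using assms(4) unfolding closure_approachable by (meson half_gt_zero)
  then have "norm f > 0" using \<open>0 \<notin> G\<close> by auto
  define y where "y = (1 / norm f) *\<^sub>R f"
  have "y \<in> G" "norm y = 1" using scale[OF \<open>f \<in> G\<close>] \<open>norm f > 0\<close> by (simp_all add: y_def)
  have "y - f = (1 / norm f - 1) *\<^sub>R f" by (simp add: y_def scaleR_diff_left)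
  moreover have "(1 / norm f - 1) * norm f = 1 - norm f" using \<open>norm f > 0\<close> by (simp add: field_simps)
  ultimately have "dist y f = \<bar>norm x - norm f\<bar>"
    using \<open>norm x = 1\<close> by (metis dist_norm norm_scaleR abs_mult abs_norm_cancel)
  also have "\<dots> \<le> dist f x"
    using norm_triangle_ineq3[of x f] by (simp add: dist_norm norm_minus_commute)
  finally have "dist y x < e" using dist_triangle[of y x f] \<open>dist f x < e / 2\<close> by linarith
  then show "\<exists>y'\<in>{y \<in> G. norm y = 1}. dist y' x < e" using \<open>y \<in> G\<close> \<open>norm y = 1\<close> by blast
qed

lemma gdelta_in_trace:
  fixes U :: "nat \<Rightarrow> 'c::topological_space set"
  assumes "S \<subseteq> A" "\<And>n. openin (top_of_set A) (U n)"
  shows "gdelta_in S (S \<inter> (\<Inter>n. U n))"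
  unfolding gdelta_in_def
proof (intro exI conjI allI)
  show "openin (top_of_set S) (S \<inter> U n)" for n
  proof -
    obtain T where "open T" "U n = A \<inter> T" using assms(2)[of n] unfolding openin_open by blast
    then have "S \<inter> U n = S \<inter> T" using assms(1) by blast
    then show ?thesis using \<open>open T\<close> by (simp add: openin_open_Int)
  qed
  show "S \<inter> (\<Inter>n. U n) = (\<Inter>n. S \<inter> U n)" by blast
qed


text \<open>If there is no strong peak point, the norming hypothesis forces A = {0}, so its unit sphere is empty.\<close>
lemma norming_empty_unit_sphere:
  assumes "norming {} A"
  shows "unit_sphere_A A = {}"
  using assms unfolding norming_def unit_sphere_A_def by force

text \<open>The witness is the trace on the unit sphere S
  of the intersection P of all sets U_n.\<close>
theorem smooth_points_residual:
  fixes A :: "('a::complete_space \<Rightarrow>\<^sub>C 'b::{real_normed_field,banach}) set"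
  assumes sub: "subalgebra_Cb A" and "closed A" and norming: "norming (strong_peak_points A) A"
    and re1: "re 1 = 1" and reI: "\<And>z. norm z \<le> 1 \<Longrightarrow> re z = 1 \<Longrightarrow> z = 1"
  shows "conclusion_smooth re A"
proof (cases "strong_peak_points A = {}")
  case True
  then have "unit_sphere_A A = {}" using norming_empty_unit_sphere norming by simp
  moreover have "gdelta_in {} {}" unfolding gdelta_in_def by (intro exI[of _ "\<lambda>n. {}"]) simp
  ultimately show ?thesis unfolding conclusion_smooth_def by (intro exI[of _ "{}"]) simp
next
  case False
  define S where "S = unit_sphere_A A"
  define P where "P = (\<Inter>n. concentrated_set A n)"
  have "S \<subseteq> A" by (auto simp: S_def unit_sphere_A_def)
  have "P \<subseteq> A" by (auto simp: P_def concentrated_set_def)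
  have "A \<subseteq> closure P"
    unfolding P_def using \<open>closed A\<close> concentrated_set_open concentrated_set_dense[OF sub norming False]
    by (rule closed_Baire)
  have "S \<subseteq> closure (S \<inter> P)"
  proof
    fix x
    assume "x \<in> S"
    have "S \<inter> P = {y \<in> P. norm y = 1}" using \<open>P \<subseteq> A\<close> by (auto simp: S_def unit_sphere_A_def)
    moreover have "x \<in> closure {y \<in> P. norm y = 1}"
    proof (rule normalised_points_dense)
      show "c *\<^sub>R y \<in> P" if "y \<in> P" "c > 0" for y and c :: real
        using that concentrated_set_scaleR[OF sub] by (simp add: P_def)
      show "0 \<notin> P"
        using concentrated_nonzero[of 0] by (auto simp: P_def concentrated_set_def)
      show "norm x = 1" "x \<in> closure P"
        using \<open>x \<in> S\<close> \<open>S \<subseteq> A\<close> \<open>A \<subseteq> closure P\<close> by (auto simp: S_def unit_sphere_A_def)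
    qed
    ultimately show "x \<in> closure (S \<inter> P)" by simp
  qed
  moreover have "smooth_point re A x" if "x \<in> S \<inter> P" for x
  proof -
    have "\<exists>t. concentrated x t (1 / real (Suc n))" for n
      using that by (auto simp: P_def concentrated_set_def)
    then obtain t where "peaks_at x t" by (rule peaks_at_limit_of_centres)
    moreover have "x \<in> A" "norm x = 1" using that by (auto simp: S_def unit_sphere_A_def)
    ultimately show ?thesis using peaks_at_smooth_point[where re = re, OF sub re1 reI] by blast
  qed
  moreover have "gdelta_in S (S \<inter> P)"
    unfolding P_def by (rule gdelta_in_trace[OF \<open>S \<subseteq> A\<close> concentrated_set_open])
  ultimately show ?thesis
    unfolding conclusion_smooth_def S_def[symmetric] by (intro exI[of _ "S \<inter> P"]) auto
qed

lemma complex_Re_eq_one: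
  assumes "cmod z \<le> 1" "Re z = 1"
  shows "z = 1"
proof -
  have "(Re z)\<^sup>2 + (Im z)\<^sup>2 \<le> 1"
    using cmod_power2[of z] power_le_one[OF norm_ge_zero assms(1), of 2] by simp
  then have "Im z = 0" using assms(2) by simp
  then show ?thesis using assms(2) by (simp add: complex_eq_iff)
qed

theorem corollary2p2:
  shows "(\<forall>A :: ('a::complete_space \<Rightarrow>\<^sub>C real) set. subalgebra_Cb A \<and> closed A \<and> norming (strong_peak_points A) A
            \<longrightarrow> conclusion_smooth (\<lambda>x. x) A)
       \<and> (\<forall>A :: ('a::complete_space \<Rightarrow>\<^sub>C complex) set. subalgebra_Cb A \<and> closed A \<and> norming (strong_peak_points A) A
            \<longrightarrow> conclusion_smooth Re A)"
proof (intro conjI allI impI)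
  fix A :: "('a::complete_space \<Rightarrow>\<^sub>C real) set"
  assume "subalgebra_Cb A \<and> closed A \<and> norming (strong_peak_points A) A"
  then show "conclusion_smooth (\<lambda>x. x) A" by (intro smooth_points_residual) auto
next
  fix A :: "('a::complete_space \<Rightarrow>\<^sub>C complex) set"
  assume "subalgebra_Cb A \<and> closed A \<and> norming (strong_peak_points A) A"
  then show "conclusion_smooth Re A" by (intro smooth_points_residual) (auto intro: complex_Re_eq_one)
qed

end
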